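(* Let $D_i$ be a finite set with a total order $\geq_i$ (reflexive, transitive, antisymmetric, total), with strict part $>$. For subsets $X',X''\subseteq D_i$ define $X'\succeq X''$ iff for every $d''\in X''\setminus X'$ there exists $d'\in X'\setminus X''$ with $d'>d''$. Then $\succeq$ is reflexive ($X\succeq X$ for all $X\subseteq D_i$), antisymmetric ($X_1\succeq X_2$ and $X_2\succeq X_1$ imply $X_1=X_2$), and for subsets $X_1,X_2,X_3\subseteq D_i$ with $X_1\not\subseteq X_3$ and $X_3\not\subseteq X_1$, $X_1\succeq X_2$ and $X_2\succeq X_3$ imply $X_1\succeq X_3$.
   Context: Here $D_i$ is the finite set of desire rules of an agent, totally ordered by a priority relation $\geq_i$; $\succeq$ lifts this ordering to sets of desire rules. *)

theory Defs
  imports Main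
begin

definition total_order_on :: "'a set \<Rightarrow> ('a \<Rightarrow> 'a \<Rightarrow> bool) \<Rightarrow> bool" where
  "total_order_on D ge \<longleftrightarrow>
     (\<forall>x\<in>D. ge x x) \<and>
     (\<forall>x\<in>D. \<forall>y\<in>D. \<forall>z\<in>D. ge x y \<and> ge y z \<longrightarrow> ge x z) \<and>
     (\<forall>x\<in>D. \<forall>y\<in>D. ge x y \<and> ge y x \<longrightarrow> x = y) \<and>
     (\<forall>x\<in>D. \<forall>y\<in>D. ge x y \<or> ge y x)"

definition strict_part :: "('a \<Rightarrow> 'a \<Rightarrow> bool) \<Rightarrow> 'a \<Rightarrow> 'a \<Rightarrow> bool" where
  "strict_part ge x y \<longleftrightarrow> ge x y \<and> \<not> ge y x"

definition set_pref :: "('a \<Rightarrow> 'a \<Rightarrow> bool) \<Rightarrow> 'a set \<Rightarrow> 'a set \<Rightarrow> bool" where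
  "set_pref ge X1 X2 \<longleftrightarrow>
     (\<forall>d2 \<in> X2 - X1. \<exists>d1 \<in> X1 - X2. strict_part ge d1 d2)"

end

(* On a finite totally ordered set, X \<succeq> Y holds exactly when X = Y or the greatest
   element of the symmetric difference of X and Y lies in X; so \<succeq> compares the
   characteristic functions of X and Y lexicographically from the top down.  Reflexivity
   and antisymmetry follow at once, and transitivity holds even without the hypotheses
   that X1 and X3 are incomparable: the greatest element m of the symmetric differences
   of X1, X2 and of X2, X3 lies in X1 if it separates X1 from X2 and in X2 if it separates
   X2 from X3, which forces m into X1 - X3. *)
theory Submission
  imports Defs
begin

lemma total_order_on_finite_greatest:
  assumes "total_order_on D ge" and "finite S" and "S \<subseteq> D" and "S \<noteq> {}"
  obtains m where "m \<in> S" and "\<forall>z\<in>S. ge m z"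
proof -
  have "\<exists>m\<in>S. \<forall>z\<in>S. ge m z"
    using assms(2,4,3)
  proof (induction S rule: finite_ne_induct)
    case (singleton x)
    then show ?case using assms(1) by (simp add: total_order_on_def)
  next
    case (insert x F)
    then obtain m where m: "m \<in> F" "\<forall>z\<in>F. ge m z" by auto
    have "x \<in> D" "m \<in> D" "F \<subseteq> D" using insert.prems m by auto
    then show ?case
      using assms(1) m unfolding total_order_on_def by (metis insert_iff subsetD)
  qed
  then show ?thesis using that by blast
qed

lemma set_pref_iff_greatest_mem:
  assumes "total_order_on D ge" and "X \<subseteq> D" and "Y \<subseteq> D"
    and m: "m \<in> sym_diff X Y" "\<forall>z \<in> sym_diff X Y. ge m z"
  shows "set_pref ge X Y \<longleftrightarrow> m \<in> X"
proof
  assume "set_pref ge X Y"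
  show "m \<in> X"
  proof (rule ccontr)
    assume "m \<notin> X"
    then obtain d where "d \<in> X - Y" "strict_part ge d m"
      using \<open>set_pref ge X Y\<close> m(1) unfolding set_pref_def by blast
    then show False using m(2) by (simp add: strict_part_def)
  qed
next
  assume "m \<in> X"
  show "set_pref ge X Y"
    unfolding set_pref_def
  proof
    fix d assume d: "d \<in> Y - X"
    have "ge m d" using m(2) d by blast
    moreover have "\<not> ge d m"
    proof
      assume "ge d m"
      with \<open>ge m d\<close> have "d = m"
        using assms(1-3) m(1) d unfolding total_order_on_def by blast
      then show False using \<open>m \<in> X\<close> d by blast
    qed
    ultimately show "\<exists>d1\<in>X - Y. strict_part ge d1 d"
      using \<open>m \<in> X\<close> m(1) by (auto simp: strict_part_def)
  qed
qed

lemma set_pref_refl: "set_pref ge X X"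
  by (simp add: set_pref_def)

lemma set_pref_antisym:
  assumes "finite D" and "total_order_on D ge" and "X \<subseteq> D" and "Y \<subseteq> D"
    and "set_pref ge X Y" and "set_pref ge Y X"
  shows "X = Y"
proof (rule ccontr)
  assume "X \<noteq> Y"
  then have "sym_diff X Y \<noteq> {}" by blast
  moreover have "finite (sym_diff X Y)" "sym_diff X Y \<subseteq> D"
    using assms(1,3,4) finite_subset by blast+
  ultimately obtain m where m: "m \<in> sym_diff X Y" "\<forall>z \<in> sym_diff X Y. ge m z"
    using total_order_on_finite_greatest[OF assms(2)] by metis
  have "m \<in> X" using set_pref_iff_greatest_mem[OF assms(2-4) m] assms(5) by blast
  moreover have "m \<in> Y" using set_pref_iff_greatest_mem[OF assms(2,4,3)] m assms(6) by auto
  ultimately show False using m(1) by blast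
qed

lemma set_pref_trans:
  assumes "finite D" and "total_order_on D ge" and "X1 \<subseteq> D" and "X2 \<subseteq> D" and "X3 \<subseteq> D"
    and "set_pref ge X1 X2" and "set_pref ge X2 X3"
  shows "set_pref ge X1 X3"
proof (cases "X1 = X2 \<and> X2 = X3")
  case True
  then show ?thesis by (simp add: set_pref_refl)
next
  case False
  define U where "U = sym_diff X1 X2 \<union> sym_diff X2 X3"
  have "U \<noteq> {}" using False unfolding U_def by blast
  moreover have "finite U" "U \<subseteq> D"
    using assms(1,3-5) finite_subset unfolding U_def by blast+
  ultimately obtain m where m: "m \<in> U" "\<forall>z\<in>U. ge m z"
    using total_order_on_finite_greatest[OF assms(2)] by metis
  have "m \<in> X1" if "m \<in> sym_diff X1 X2"
  proof -
    have "\<forall>z \<in> sym_diff X1 X2. ge m z" using m(2) unfolding U_def by blast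
    then show ?thesis using set_pref_iff_greatest_mem[OF assms(2-4) that] assms(6) by blast
  qed
  moreover have "m \<in> X2" if "m \<in> sym_diff X2 X3"
  proof -
    have "\<forall>z \<in> sym_diff X2 X3. ge m z" using m(2) unfolding U_def by blast
    then show ?thesis using set_pref_iff_greatest_mem[OF assms(2,4,5) that] assms(7) by blast
  qed
  ultimately have "m \<in> X1 - X3" using m(1) unfolding U_def by blast
  moreover have "\<forall>z \<in> sym_diff X1 X3. ge m z" using m(2) unfolding U_def by blast
  ultimately show ?thesis
    using set_pref_iff_greatest_mem[OF assms(2,3,5)] by blast
qed

theorem mainTheorem6:
  fixes D :: "'a set" and ge :: "'a \<Rightarrow> 'a \<Rightarrow> bool"
  assumes "finite D" and "total_order_on D ge"
  shows "(\<forall>X. X \<subseteq> D \<longrightarrow> set_pref ge X X)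
    \<and> (\<forall>X1 X2. X1 \<subseteq> D \<longrightarrow> X2 \<subseteq> D \<longrightarrow> set_pref ge X1 X2 \<longrightarrow> set_pref ge X2 X1 \<longrightarrow> X1 = X2)
    \<and> (\<forall>X1 X2 X3. X1 \<subseteq> D \<longrightarrow> X2 \<subseteq> D \<longrightarrow> X3 \<subseteq> D \<longrightarrow>
          \<not> X1 \<subseteq> X3 \<longrightarrow> \<not> X3 \<subseteq> X1 \<longrightarrow>
          set_pref ge X1 X2 \<longrightarrow> set_pref ge X2 X3 \<longrightarrow> set_pref ge X1 X3)"
  by (meson set_pref_refl set_pref_antisym[OF assms] set_pref_trans[OF assms])

end
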